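(* Let $s$ be a Lucasian GNS on a ring $D$. Then for all $a\in\mathbf N$ and $b\ge1$, \[ \tilde s_b(a)\equiv a\bmod s(b), \] where $\tilde s_b(a)=s(ab)/s(b)$.
   Context: A generalized $n$-series (GNS) over a ring $D$ is a function $s\colon\mathbf N\to D$ with $s(0)=0$, $s(n)$ a non-zero-divisor for $n>0$, and $s(n-k)\mid s(n)-s(k)$ for $n>k>0$. It is Lucasian if $s(a+b)\equiv s(a)+s(b)\bmod s(a)s(b)$ for all $a,b$. The rescaled GNS is $s_b(n)=s(bn)$ and the reduction of a GNS $t$ is $\tilde t(n)=t(n)/t(1)$; so $\tilde s_b(a)=s(ab)/s(b)$. *)

theory Defs
  imports Main
begin

definition non_zero_divisor :: "'a::comm_ring_1 \<Rightarrow> bool" where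
  "non_zero_divisor d \<longleftrightarrow> (\<forall>x. d * x = 0 \<longrightarrow> x = 0)"

definition GNS :: "(nat \<Rightarrow> 'a::comm_ring_1) \<Rightarrow> bool" where
  "GNS s \<longleftrightarrow> s 0 = 0 \<and> (\<forall>n>0. non_zero_divisor (s n))
     \<and> (\<forall>n k. n > k \<and> k > 0 \<longrightarrow> s (n - k) dvd (s n - s k))"

definition Lucasian :: "(nat \<Rightarrow> 'a::comm_ring_1) \<Rightarrow> bool" where
  "Lucasian s \<longleftrightarrow> GNS s \<and>
     (\<forall>a b. s a * s b dvd (s (a + b) - (s a + s b)))"

(* exact quotient x / y in the ring: the unique q with y * q = x
   (unique when y is a non-zero-divisor and y divides x) *)
definition rdiv :: "'a::comm_ring_1 \<Rightarrow> 'a \<Rightarrow> 'a" where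
  "rdiv x y = (THE q. y * q = x)"

definition rescale :: "(nat \<Rightarrow> 'a::comm_ring_1) \<Rightarrow> nat \<Rightarrow> nat \<Rightarrow> 'a" where
  "rescale s b n = s (b * n)"

definition reduction :: "(nat \<Rightarrow> 'a::comm_ring_1) \<Rightarrow> nat \<Rightarrow> 'a" where
  "reduction t n = rdiv (t n) (t 1)"

end

theory Submission
  imports Defs
begin

(* Induction on a: the Lucasian congruence with arguments a b and b gives
   s((a+1)b) = s(ab) + s(b) + s(ab) s(b) k, so the cofactor of s(b) in s(ab)
   grows by 1 modulo s(b) at each step. *)

lemma rdiv_eqI:
  fixes x y q :: "'a::comm_ring_1"
  assumes "non_zero_divisor y" and "y * q = x"
  shows "rdiv x y = q"
  unfolding rdiv_def
proof (rule the_equality)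
  fix q' assume "y * q' = x"
  with \<open>y * q = x\<close> have "y * (q' - q) = 0" by (simp add: right_diff_distrib)
  with assms(1) show "q' = q" unfolding non_zero_divisor_def by auto
qed (fact assms(2))

lemma Lucasian_zero:
  "Lucasian s \<Longrightarrow> s 0 = 0"
  by (simp add: Lucasian_def GNS_def)

lemma Lucasian_non_zero_divisor:
  "Lucasian s \<Longrightarrow> n > 0 \<Longrightarrow> non_zero_divisor (s n)"
  by (simp add: Lucasian_def GNS_def)

lemma Lucasian_multiple_cofactor_cong:
  fixes s :: "nat \<Rightarrow> 'a::comm_ring_1"
  assumes "Lucasian s"
  shows "\<exists>q. s (a * b) = s b * q \<and> s b dvd (q - of_nat a)"
proof (induction a)
  case 0
  show ?case using Lucasian_zero[OF assms] by (intro exI[of _ 0]) simp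
next
  case (Suc a)
  then obtain q m where q: "s (a * b) = s b * q" and m: "q - of_nat a = s b * m"
    by (auto elim: dvdE)
  have "s (a * b) * s b dvd s (a * b + b) - (s (a * b) + s b)"
    using assms by (simp add: Lucasian_def)
  then obtain k where k: "s (a * b + b) - (s (a * b) + s b) = s (a * b) * s b * k"
    by (elim dvdE)
  define q' where "q' = q + 1 + q * s b * k"
  have "s (Suc a * b) = s b * q'"
    using k q by (simp add: q'_def algebra_simps eq_diff_eq)
  moreover have "q' - of_nat (Suc a) = s b * (m + q * k)"
    using m by (simp add: q'_def algebra_simps eq_diff_eq)
  ultimately show ?case by auto
qed

theorem lemma5p11:
  fixes s :: "nat \<Rightarrow> 'a::comm_ring_1" and a b :: nat
  assumes "Lucasian s"
    and "b \<ge> 1"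
  shows "s b dvd (reduction (rescale s b) a - of_nat a)"
proof -
  obtain q where q: "s (a * b) = s b * q" and cong: "s b dvd (q - of_nat a)"
    using Lucasian_multiple_cofactor_cong[OF assms(1)] by blast
  have "non_zero_divisor (s b)"
    using Lucasian_non_zero_divisor[OF assms(1)] assms(2) by simp
  then have "rdiv (s (b * a)) (s b) = q"
    using q by (intro rdiv_eqI) (simp_all add: mult.commute)
  then have "reduction (rescale s b) a = q"
    by (simp add: reduction_def rescale_def)
  with cong show ?thesis by simp
qed

end
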